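(* Suppose the network connectivity assumption and the Poincaré scaling assumption hold, and let $C_\Pi>0$ be a constant (independent of $H$) such that $|v-\Pi_Hv|_M\le C_\Pi H|v|_L$ for all $v\in\hat V$, $H\in\mathcal H$. Let $H\in\mathcal H$, $f\in\hat V$, let $u=\mathcal K^{-1}f$, and let $u_H\in V_H:=\mathcal K^{-1}\mathbb P^0(\mathcal T_H)$ be the Galerkin approximation: $(Ku_H,v_H)=(Mf,v_H)$ for all $v_H\in V_H$. Then $$|u-u_H|_L\le C_\Pi\alpha^{-1}H\,|f-\Pi_Hf|_M\le C_\Pi^2\alpha^{-1}H^2\,|f|_L .$$
   Context: Let $d\in\mathbb N$, $\Omega=[0,1]^d$, and let $\mathcal G=(\mathcal N,\mathcal E)$ be a finite connected graph with at least two nodes, whose nodes $\mathcal N$ are distinct points of $\Omega$. Write $x\sim y$ if $\{x,y\}\in\mathcal E$, and $|x-y|$ for the Euclidean distance. For $\omega\subset\Omega$ let $\mathcal N(\omega)=\mathcal N\cap\omega$. Let $\Gamma\subset\partial\Omega$ with $\mathcal N(\Gamma)\ne\emptyset$. $\hat V$ is the space of real functions on $\mathcal N$ with $(u,v)=\sum_xu(x)v(x)$; $V=\{v\in\hat V:v=0\text{ on }\mathcal N(\Gamma)\}$. Symmetric operators: $(M_xv,w)=\tfrac12\sum_{y\sim x}|x-y|v(x)w(x)$, $(L_xv,w)=\tfrac12\sum_{y\sim x}\frac{(v(x)-v(y))(w(x)-w(y))}{|x-y|}$, $(K_xv,w)=\tfrac12\sum_{y\sim x}\gamma_{xy}\frac{(v(x)-v(y))(w(x)-w(y))}{|x-y|}$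 with $\gamma_{xy}=\gamma_{yx}\in[\alpha,\beta]$, $0<\alpha\le\beta<\infty$; $M=\sum_xM_x$, $L=\sum_xL_x$, $K=\sum_xK_x$; for $\omega\subset\Omega$, $M_\omega=\sum_{x\in\mathcal N(\omega)}M_x$, $L_\omega=\sum_{x\in\mathcal N(\omega)}L_x$. Seminorms $|v|_M^2=(Mv,v)$, $|v|_L^2=(Lv,v)$, $|v|_{M,\omega}^2=(M_\omega v,v)$, $|v|_{L,\omega}^2=(L_\omega v,v)$. The solution operator $\mathcal K^{-1}:\hat V\to V$ maps $f$ to the unique $u\in V$ with $(Ku,v)=(Mf,v)$ for all $v\in V$. Mesh: for $H>0$ with $1/H\in\mathbb N$, $\mathcal T_H$ consists of the cubes $I_1\times\dots\times I_d$, $I_i=[a_i,a_i+H)$, $a_i\in\{0,H,\dots,1-H\}$, except $I_i=[a_i,a_i+H]$ when $a_i+H=1$. $\mathsf N(\omega)$ is the union of all $T\in\mathcal T_H$ with $\overline T\cap\overline\omega\neq\emptyset$. $\mathcal H$ is a finite set of admissible mesh sizes. $\mathbf 1_T$ is the indicator of nodes in $T$; $\mathbb P^0(\mathcal T_H)=\mathrm{span}\{\mathbf 1_T\}$; $\Pi_Hv=\sum_T\frac{(M_Tv,1)}{|1|_{M,T}^2}\mathbf 1_T$ (term $0$ if $T$ has no node). Network connectivity assumption: for every $H\in\mathcal H$ and $T\in\mathcal T_H$ there is a connected subgraph of $\mathcal G$ containing all edges with at least one endpoint in $T$ and only edges with both endpoints in $\mathsf N(T)$. Poincaré scaling assumption: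 there is $\mu>0$ such that for all $H\in\mathcal H$, $T\in\mathcal T_H$, $v\in\hat V$ there exists $c\in\mathbb R$ with $|v-c|_{M,T}\le\mu H|v|_{L,\mathsf N(T)}$. *)

theory Defs
  imports "HOL-Analysis.Analysis"
begin

text \<open>The graph is given by a finite node set N and a symmetric edge relation E \<subseteq> N \<times> N;
  x \<sim> y means (x,y) \<in> E. Grid functions are functions real^'d \<Rightarrow> real (only values on N matter).\<close>

definition Omega :: "(real^'d) set" where
  "Omega = {x. \<forall>i. 0 \<le> x$i \<and> x$i \<le> 1}"

definition nbrs :: "(real^'d) set \<Rightarrow> ((real^'d) \<times> (real^'d)) set \<Rightarrow> real^'d \<Rightarrow> (real^'d) set" where
  "nbrs N E x = {y\<in>N. (x,y) \<in> E}"

definition Mloc :: "(real^'d) set \<Rightarrow> ((real^'d) \<times> (real^'d)) set \<Rightarrow> real^'d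
     \<Rightarrow> (real^'d \<Rightarrow> real) \<Rightarrow> (real^'d \<Rightarrow> real) \<Rightarrow> real" where
  "Mloc N E x v w = (1/2) * (\<Sum>y\<in>nbrs N E x. dist x y * v x * w x)"

definition Lloc :: "(real^'d) set \<Rightarrow> ((real^'d) \<times> (real^'d)) set \<Rightarrow> real^'d
     \<Rightarrow> (real^'d \<Rightarrow> real) \<Rightarrow> (real^'d \<Rightarrow> real) \<Rightarrow> real" where
  "Lloc N E x v w = (1/2) * (\<Sum>y\<in>nbrs N E x. (v x - v y) * (w x - w y) / dist x y)"

definition Kloc :: "(real^'d) set \<Rightarrow> ((real^'d) \<times> (real^'d)) set \<Rightarrow> (real^'d \<Rightarrow> real^'d \<Rightarrow> real)
     \<Rightarrow> real^'d \<Rightarrow> (real^'d \<Rightarrow> real) \<Rightarrow> (real^'d \<Rightarrow> real) \<Rightarrow> real" where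
  "Kloc N E \<gamma> x v w = (1/2) * (\<Sum>y\<in>nbrs N E x. \<gamma> x y * (v x - v y) * (w x - w y) / dist x y)"

definition Mform_on where
  "Mform_on N E \<omega> v w = (\<Sum>x\<in>N \<inter> \<omega>. Mloc N E x v w)"
definition Lform_on where
  "Lform_on N E \<omega> v w = (\<Sum>x\<in>N \<inter> \<omega>. Lloc N E x v w)"
definition Mform where
  "Mform N E v w = (\<Sum>x\<in>N. Mloc N E x v w)"
definition Lform where
  "Lform N E v w = (\<Sum>x\<in>N. Lloc N E x v w)"
definition Kform where
  "Kform N E \<gamma> v w = (\<Sum>x\<in>N. Kloc N E \<gamma> x v w)"

definition semiM where "semiM N E v = sqrt (Mform N E v v)"
definition semiL where "semiL N E v = sqrt (Lform N E v v)"
definition semiM_on where "semiM_on N E \<omega> v = sqrt (Mform_on N E \<omega> v v)"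
definition semiL_on where "semiL_on N E \<omega> v = sqrt (Lform_on N E \<omega> v v)"

definition Vsp :: "(real^'d) set \<Rightarrow> (real^'d) set \<Rightarrow> (real^'d \<Rightarrow> real) set" where
  "Vsp N \<Gamma> = {v. \<forall>x\<in>N \<inter> \<Gamma>. v x = 0}"

text \<open>u = K^{-1} f : u \<in> V and (K u, v) = (M f, v) for all v \<in> V\<close>
definition solves where
  "solves N E \<gamma> \<Gamma> f u \<longleftrightarrow> u \<in> Vsp N \<Gamma> \<and> (\<forall>v\<in>Vsp N \<Gamma>. Kform N E \<gamma> u v = Mform N E f v)"

definition cube :: "real \<Rightarrow> ('d \<Rightarrow> nat) \<Rightarrow> (real^'d) set" where
  "cube H k = {x. \<forall>i. real (k i) * H \<le> x$i \<and>
       (x$i < real (k i) * H + H \<or> (real (k i) * H + H = 1 \<and> x$i \<le> 1))}"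

definition cells :: "real \<Rightarrow> (real^'d) set set" where
  "cells H = {cube H k | k. \<forall>i. real (k i) * H + H \<le> 1}"

definition patch :: "real \<Rightarrow> (real^'d) set \<Rightarrow> (real^'d) set" where
  "patch H \<omega> = \<Union>{T\<in>cells H. closure T \<inter> closure \<omega> \<noteq> {}}"

definition P0 :: "real \<Rightarrow> (real^'d \<Rightarrow> real) set" where
  "P0 H = {g. \<exists>c. g = (\<lambda>z. \<Sum>T\<in>cells H. c T * indicator T z)}"

definition PiH :: "(real^'d) set \<Rightarrow> ((real^'d) \<times> (real^'d)) set \<Rightarrow> real
     \<Rightarrow> (real^'d \<Rightarrow> real) \<Rightarrow> (real^'d \<Rightarrow> real)" where
  "PiH N E H v = (\<lambda>z. \<Sum>T\<in>cells H.
      (if N \<inter> T = {} then 0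
       else Mform_on N E T v (\<lambda>_. 1) / Mform_on N E T (\<lambda>_. 1) (\<lambda>_. 1)) * indicator T z)"

definition VH where
  "VH N E \<gamma> \<Gamma> H = {u. \<exists>g\<in>P0 H. solves N E \<gamma> \<Gamma> g u}"

definition network_connectivity where
  "network_connectivity N E Hs \<longleftrightarrow> (\<forall>H\<in>Hs. \<forall>T\<in>cells H. \<exists>F. F \<subseteq> E \<and> sym F \<and>
      (\<forall>x\<in>Field F. \<forall>y\<in>Field F. (x,y) \<in> F\<^sup>*) \<and>
      (\<forall>(x,y)\<in>E. x \<in> T \<or> y \<in> T \<longrightarrow> (x,y) \<in> F) \<and>
      (\<forall>(x,y)\<in>F. x \<in> patch H T \<and> y \<in> patch H T))"

definition poincare_scaling where
  "poincare_scaling N E Hs \<longleftrightarrow> (\<exists>\<mu>>0. \<forall>H\<in>Hs. \<forall>T\<in>cells H. \<forall>v.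
      \<exists>c::real. semiM_on N E T (\<lambda>x. v x - c) \<le> \<mu> * H * semiL_on N E (patch H T) v)"

end

theory Submission
  imports Defs "HOL-Library.Function_Algebras"
begin

text \<open>Let e = u - u_H. Galerkin orthogonality gives (Ke, e) = (Mf, e). Since V_H is the
  image of the piecewise constants under the solution operator, e is M-orthogonal to the piecewise
  constants, and by construction of the projection so is the residual f - Pi_H f; hence
  (Mf, e) = (M(f - Pi_H f), e - Pi_H e). Cauchy-Schwarz, the approximation property of Pi_H applied
  to e, and the coercivity alpha |e|_L^2 <= (Ke, e) give the first bound; the approximation property
  applied to f gives the second. The orthogonality needs the discrete problem to be solvable for
  every right-hand side: (Kv, v) = 0 forces v to be constant on the connected graph, hence zero on
  V, so K is injective on V and, by finite dimension, surjective.\<close>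

section \<open>The bilinear forms\<close>

lemma Kform_linear_left:
  "Kform N E \<gamma> (\<lambda>x. a * v x + b * w x) z = a * Kform N E \<gamma> v z + b * Kform N E \<gamma> w z"
proof -
  have "\<gamma> x y * ((a * v x + b * w x) - (a * v y + b * w y)) * (z x - z y) / dist x y
     = a * (\<gamma> x y * (v x - v y) * (z x - z y) / dist x y)
       + b * (\<gamma> x y * (w x - w y) * (z x - z y) / dist x y)" for x y
    by (simp add: algebra_simps add_divide_distrib diff_divide_distrib)
  then show ?thesis
    unfolding Kform_def Kloc_def by (simp add: sum.distrib sum_distrib_left algebra_simps)
qed

lemma Kform_commute: "Kform N E \<gamma> v w = Kform N E \<gamma> w v"
  unfolding Kform_def Kloc_def by (simp add: mult.commute mult.left_commute)

lemma Kform_linear_right: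
  "Kform N E \<gamma> z (\<lambda>x. a * v x + b * w x) = a * Kform N E \<gamma> z v + b * Kform N E \<gamma> z w"
  using Kform_linear_left[of N E \<gamma> a v b w z] by (simp only: Kform_commute[of N E \<gamma> z])

lemma Kform_diff_left: "Kform N E \<gamma> (\<lambda>x. v x - w x) z = Kform N E \<gamma> v z - Kform N E \<gamma> w z"
  using Kform_linear_left[of N E \<gamma> 1 v "-1" w z] by simp

lemma Mform_linear_left:
  "Mform N E (\<lambda>x. a * v x + b * w x) z = a * Mform N E v z + b * Mform N E w z"
  unfolding Mform_def Mloc_def by (simp add: sum.distrib sum_distrib_left algebra_simps)

lemma Mform_commute: "Mform N E v w = Mform N E w v"
  unfolding Mform_def Mloc_def by (simp add: mult.commute mult.left_commute)

lemma Mform_linear_right: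
  "Mform N E z (\<lambda>x. a * v x + b * w x) = a * Mform N E z v + b * Mform N E z w"
  using Mform_linear_left[of N E a v b w z] by (simp only: Mform_commute[of N E z])

lemma Mform_diff_left: "Mform N E (\<lambda>x. v x - w x) z = Mform N E v z - Mform N E w z"
  using Mform_linear_left[of N E 1 v "-1" w z] by simp

lemma Mform_diff_right: "Mform N E z (\<lambda>x. v x - w x) = Mform N E z v - Mform N E z w"
  using Mform_linear_right[of N E z 1 v "-1" w] by simp

lemma Kform_sum_right:
  "finite S \<Longrightarrow> Kform N E \<gamma> w (\<lambda>x. \<Sum>z\<in>S. c z * h z x) = (\<Sum>z\<in>S. c z * Kform N E \<gamma> w (h z))"
proof (induction S rule: finite_induct)
  case empty
  show ?case using Kform_linear_right[of N E \<gamma> w 0 w 0 w] by simp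
next
  case (insert a S)
  then show ?case
    using Kform_linear_right[of N E \<gamma> w "c a" "h a" 1 "\<lambda>x. \<Sum>z\<in>S. c z * h z x"] by simp
qed

lemma Mform_sum_right:
  "finite S \<Longrightarrow> Mform N E w (\<lambda>x. \<Sum>z\<in>S. c z * h z x) = (\<Sum>z\<in>S. c z * Mform N E w (h z))"
proof (induction S rule: finite_induct)
  case empty
  show ?case using Mform_linear_right[of N E w 0 w 0 w] by simp
next
  case (insert a S)
  then show ?case
    using Mform_linear_right[of N E w "c a" "h a" 1 "\<lambda>x. \<Sum>z\<in>S. c z * h z x"] by simp
qed

lemma Kform_cong_right:
  "(\<And>x. x \<in> N \<Longrightarrow> v x = v' x) \<Longrightarrow> Kform N E \<gamma> w v = Kform N E \<gamma> w v'"
  unfolding Kform_def Kloc_def nbrs_def by (intro sum.cong arg_cong[where f="\<lambda>t. _ * t"]) auto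

lemma Mform_cong_right:
  "(\<And>x. x \<in> N \<Longrightarrow> v x = v' x) \<Longrightarrow> Mform N E w v = Mform N E w v'"
  unfolding Mform_def Mloc_def nbrs_def by (intro sum.cong arg_cong[where f="\<lambda>t. _ * t"]) auto

lemma sum_indicator_singleton_eq:
  "finite N \<Longrightarrow> x \<in> N \<Longrightarrow> (\<Sum>z\<in>N. v z * indicator {z} x) = (v x :: real)"
  by (simp add: indicator_def if_distrib[where f="\<lambda>t. _ * t"] cong: if_cong)

lemma Kform_expand_right:
  assumes "finite N"
  shows "Kform N E \<gamma> w v = (\<Sum>z\<in>N. v z * Kform N E \<gamma> w (indicator {z}))"
proof -
  have "Kform N E \<gamma> w v = Kform N E \<gamma> w (\<lambda>x. \<Sum>z\<in>N. v z * indicator {z} x)"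
    by (rule Kform_cong_right, rule sum_indicator_singleton_eq[OF assms, symmetric])
  also have "\<dots> = (\<Sum>z\<in>N. v z * Kform N E \<gamma> w (indicator {z}))"
    by (rule Kform_sum_right[OF assms])
  finally show ?thesis .
qed

lemma Mform_expand_right:
  assumes "finite N"
  shows "Mform N E w v = (\<Sum>z\<in>N. v z * Mform N E w (indicator {z}))"
proof -
  have "Mform N E w v = Mform N E w (\<lambda>x. \<Sum>z\<in>N. v z * indicator {z} x)"
    by (rule Mform_cong_right, rule sum_indicator_singleton_eq[OF assms, symmetric])
  also have "\<dots> = (\<Sum>z\<in>N. v z * Mform N E w (indicator {z}))"
    by (rule Mform_sum_right[OF assms])
  finally show ?thesis .
qed

definition node_mass :: "(real^'d) set \<Rightarrow> ((real^'d) \<times> (real^'d)) set \<Rightarrow> real^'d \<Rightarrow> real" where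
  "node_mass N E x = (1/2) * (\<Sum>y\<in>nbrs N E x. dist x y)"

lemma node_mass_nonneg: "node_mass N E x \<ge> 0"
  unfolding node_mass_def by (simp add: sum_nonneg)

lemma Mform_eq_node_mass: "Mform N E v w = (\<Sum>x\<in>N. node_mass N E x * v x * w x)"
  unfolding Mform_def Mloc_def node_mass_def by (simp add: sum_distrib_right mult.assoc)

lemma Mform_on_eq_node_mass: "Mform_on N E T v w = (\<Sum>x\<in>N \<inter> T. node_mass N E x * v x * w x)"
  unfolding Mform_on_def Mloc_def node_mass_def by (simp add: sum_distrib_right mult.assoc)

lemma Mform_self_nonneg: "Mform N E v v \<ge> 0"
  unfolding Mform_eq_node_mass by (simp add: sum_nonneg node_mass_nonneg mult.assoc)

lemma semiM_nonneg: "semiM N E v \<ge> 0"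
  unfolding semiM_def using Mform_self_nonneg by simp

lemma Mform_Cauchy_Schwarz: "\<bar>Mform N E v w\<bar> \<le> semiM N E v * semiM N E w"
proof -
  define p where "p x = sqrt (node_mass N E x) * v x" for x
  define q where "q x = sqrt (node_mass N E x) * w x" for x
  have "p x * q x = node_mass N E x * v x * w x"
    "p x * p x = node_mass N E x * v x * v x" "q x * q x = node_mass N E x * w x * w x" for x
    using node_mass_nonneg[of N E x] by (simp_all add: p_def q_def mult_ac)
  then have "(Mform N E v w)\<^sup>2 \<le> Mform N E v v * Mform N E w w"
    using Cauchy_Schwarz_ineq_sum[of p q N] by (simp add: Mform_eq_node_mass power2_eq_square)
  then have "sqrt ((Mform N E v w)\<^sup>2) \<le> sqrt (Mform N E v v * Mform N E w w)"
    by (rule real_sqrt_le_mono)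
  then show ?thesis
    unfolding semiM_def by (simp add: real_sqrt_mult)
qed

lemma nbrs_dist_pos: "irrefl E \<Longrightarrow> y \<in> nbrs N E x \<Longrightarrow> dist x y > 0"
  unfolding nbrs_def irrefl_def by auto

lemma Lform_self_nonneg: "irrefl E \<Longrightarrow> Lform N E w w \<ge> 0"
  unfolding Lform_def Lloc_def
  by (intro sum_nonneg mult_nonneg_nonneg) (auto dest: nbrs_dist_pos intro: less_imp_le)

lemma semiL_nonneg: "irrefl E \<Longrightarrow> semiL N E v \<ge> 0"
  unfolding semiL_def using Lform_self_nonneg by simp

lemma Kform_coercive:
  assumes "irrefl E" and "\<forall>(x,y)\<in>E. \<alpha> \<le> \<gamma> x y" and "\<alpha> \<ge> 0"
  shows "\<alpha> * Lform N E w w \<le> Kform N E \<gamma> w w"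
proof -
  have "\<alpha> * ((w x - w y) * (w x - w y) / dist x y) \<le> \<gamma> x y * ((w x - w y) * (w x - w y) / dist x y)"
    if "y \<in> nbrs N E x" for x y
    using assms nbrs_dist_pos[OF assms(1) that] that
    by (intro mult_right_mono) (auto simp: nbrs_def)
  then have "(\<Sum>x\<in>N. (1/2) * (\<Sum>y\<in>nbrs N E x. \<alpha> * ((w x - w y) * (w x - w y) / dist x y)))
      \<le> (\<Sum>x\<in>N. (1/2) * (\<Sum>y\<in>nbrs N E x. \<gamma> x y * ((w x - w y) * (w x - w y) / dist x y)))"
    by (intro sum_mono mult_left_mono) auto
  then show ?thesis
    unfolding Kform_def Kloc_def Lform_def Lloc_def by (simp add: sum_distrib_left mult_ac)
qed

lemma Kform_self_eq_0_imp_edge_eq: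
  assumes "finite N" and "E \<subseteq> N \<times> N" and "irrefl E"
    and gamma_pos: "\<forall>(x,y)\<in>E. 0 < \<gamma> x y"
    and "Kform N E \<gamma> w w = 0" and xy: "(x,y) \<in> E"
  shows "w x = w y"
proof -
  define t where "t x y = \<gamma> x y * (w x - w y) * (w x - w y) / dist x y" for x y
  have t_nonneg: "t x' y' \<ge> 0" if "y' \<in> nbrs N E x'" for x' y'
    using gamma_pos that nbrs_dist_pos[OF assms(3) that]
    by (auto simp: t_def nbrs_def mult.assoc)
  have "finite (nbrs N E x')" for x'
    using assms(1) unfolding nbrs_def by simp
  moreover have "x \<in> N" and y: "y \<in> nbrs N E x"
    using xy assms(2) unfolding nbrs_def by auto
  moreover have "(\<Sum>x'\<in>N. (1/2) * (\<Sum>y'\<in>nbrs N E x'. t x' y')) = 0"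
    using assms(5) unfolding Kform_def Kloc_def t_def .
  ultimately have "t x y = 0"
    using assms(1) t_nonneg
    by (simp add: sum_nonneg sum_nonneg_eq_0_iff)
  moreover have "\<gamma> x y > 0" "dist x y > 0"
    using gamma_pos xy nbrs_dist_pos[OF assms(3) y] by auto
  ultimately show ?thesis
    by (simp add: t_def)
qed

section \<open>Unique solvability of the discrete problem\<close>

text \<open>Real-valued functions with pointwise scaling, as a vector space over the reals (the
  library has no \<open>real_vector\<close> instance for function types).\<close>

interpretation fun_vs: vector_space "\<lambda>c (f :: 'a \<Rightarrow> real) x. c * f x"
  by unfold_locales (auto simp: fun_eq_iff algebra_simps)

definition supported_on :: "'a set \<Rightarrow> ('a \<Rightarrow> real) set" where
  "supported_on D = {v. \<forall>x. x \<notin> D \<longrightarrow> v x = 0}"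

lemma sum_fun_apply: "(\<Sum>z\<in>S. f z) x = (\<Sum>z\<in>S. f z x)"
  by (induction S rule: infinite_finite_induct) auto

lemma fun_vs_subspace_supported_on: "fun_vs.subspace (supported_on D)"
  by (auto simp: fun_vs.subspace_def supported_on_def)

lemma fun_vs_span_indicator_singletons:
  assumes "finite D"
  shows "fun_vs.span ((\<lambda>z. indicator {z}) ` D) = supported_on D"
proof
  show "fun_vs.span ((\<lambda>z. indicator {z}) ` D) \<subseteq> supported_on D"
    by (rule fun_vs.span_minimal[OF _ fun_vs_subspace_supported_on]) (auto simp: supported_on_def indicator_def)
next
  show "supported_on D \<subseteq> fun_vs.span ((\<lambda>z. indicator {z}) ` D)"
  proof
    fix v assume v: "v \<in> supported_on D"
    have "v = (\<Sum>z\<in>D. (\<lambda>x. v z * indicator {z} x))"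
    proof
      fix x
      show "v x = (\<Sum>z\<in>D. (\<lambda>x. v z * indicator {z} x)) x"
        using v assms
        by (cases "x \<in> D") (auto simp: sum_fun_apply supported_on_def indicator_def
            if_distrib[where f="\<lambda>t. _ * t"] cong: if_cong)
    qed
    also have "\<dots> \<in> fun_vs.span ((\<lambda>z. indicator {z}) ` D)"
      by (intro fun_vs.span_sum fun_vs.span_scale fun_vs.span_base) auto
    finally show "v \<in> fun_vs.span ((\<lambda>z. indicator {z}) ` D)" .
  qed
qed

lemma fun_vs_independent_indicator_singletons:
  assumes "finite D"
  shows "fun_vs.independent ((\<lambda>z. indicator {z} :: 'a \<Rightarrow> real) ` D)"
proof (rule fun_vs.independent_if_scalars_zero)
  show "finite ((\<lambda>z. indicator {z} :: 'a \<Rightarrow> real) ` D)"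
    using assms by simp
next
  fix c :: "('a \<Rightarrow> real) \<Rightarrow> real" and v :: "'a \<Rightarrow> real"
  assume sum0: "(\<Sum>w\<in>(\<lambda>z. indicator {z}) ` D. (\<lambda>x. c w * w x)) = 0"
    and v: "v \<in> (\<lambda>z. indicator {z}) ` D"
  then obtain z where z: "v = indicator {z}" by blast
  have "c w * w z = (if w = v then c w else 0)" if "w \<in> (\<lambda>z. indicator {z}) ` D" for w
    using that z by (auto simp: indicator_def fun_eq_iff)
  then have "(\<Sum>w\<in>(\<lambda>z. indicator {z}) ` D. c w * w z) = (\<Sum>w\<in>(\<lambda>z. indicator {z}) ` D. if w = v then c w else 0)"
    by (intro sum.cong) simp_all
  then have "(\<Sum>w\<in>(\<lambda>z. indicator {z}) ` D. (\<lambda>x. c w * w x)) z = c v"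
    using assms v by (simp add: sum_fun_apply)
  then show "c v = 0"
    using sum0 by simp
qed

lemma linear_inj_on_supported_imp_surj:
  fixes A :: "('a \<Rightarrow> real) \<Rightarrow> ('a \<Rightarrow> real)"
  assumes "finite D"
    and "Vector_Spaces.linear (\<lambda>c f x. c * f x) (\<lambda>c f x. c * f x) A"
    and maps: "A ` supported_on D \<subseteq> supported_on D"
    and kernel: "\<And>v. v \<in> supported_on D \<Longrightarrow> A v = 0 \<Longrightarrow> v = 0"
  shows "A ` supported_on D = supported_on D"
proof -
  interpret lA: Vector_Spaces.linear "\<lambda>c f x. c * f x" "\<lambda>c f x. c * f x" A by fact
  define B where "B = (\<lambda>z. indicator {z} :: 'a \<Rightarrow> real) ` D"
  have inj: "inj_on A (supported_on D)"
    using kernel by (simp add: lA.inj_on_iff_eq_0[OF fun_vs_subspace_supported_on])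
  have span_B: "fun_vs.span B = supported_on D"
    unfolding B_def by (rule fun_vs_span_indicator_singletons[OF assms(1)])
  have "finite B"
    using assms(1) by (simp add: B_def)
  have B_sub: "B \<subseteq> supported_on D"
    using fun_vs.span_superset span_B by blast
  have indep_AB: "fun_vs.independent (A ` B)"
    using fun_vs_independent_indicator_singletons[OF assms(1)] inj
    by (intro lA.independent_injective_image) (simp_all add: B_def[symmetric] span_B)
  have card_AB: "card (A ` B) = card B"
    using inj B_sub by (simp add: card_image inj_on_subset)
  have "b \<in> fun_vs.span (A ` B)" if b: "b \<in> supported_on D" for b
  proof (rule ccontr)
    assume "b \<notin> fun_vs.span (A ` B)"
    then have "fun_vs.independent (insert b (A ` B))" and "b \<notin> A ` B"
      using fun_vs.independent_insertI[OF _ indep_AB] fun_vs.span_base by blast+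
    moreover have "insert b (A ` B) \<subseteq> fun_vs.span B"
      using b maps B_sub span_B by auto
    ultimately show False
      using fun_vs.independent_span_bound[OF \<open>finite B\<close>] \<open>finite B\<close> card_AB by fastforce
  qed
  then show ?thesis
    using maps lA.span_image[of B] span_B by auto
qed

lemma Kform_self_eq_0_imp_vanish:
  assumes "finite N" and "E \<subseteq> N \<times> N" and "irrefl E"
    and conn: "\<forall>x\<in>N. \<forall>y\<in>N. (x,y) \<in> E\<^sup>*" and "N \<inter> \<Gamma> \<noteq> {}"
    and "\<forall>(x,y)\<in>E. 0 < \<gamma> x y"
    and "v \<in> Vsp N \<Gamma>" and "Kform N E \<gamma> v v = 0" and "x \<in> N"
  shows "v x = 0"
proof -
  obtain x0 where x0: "x0 \<in> N \<inter> \<Gamma>"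
    using assms(5) by blast
  have "v y = v z" if "(y,z) \<in> E\<^sup>*" for y z
    using that
    by (induction rule: rtrancl_induct)
      (auto dest: Kform_self_eq_0_imp_edge_eq[OF assms(1-3,6,8)])
  then have "v x = v x0"
    using conn x0 \<open>x \<in> N\<close> by blast
  also have "v x0 = 0"
    using assms(7) x0 by (simp add: Vsp_def)
  finally show ?thesis .
qed

lemma solves_if_nodal:
  assumes "finite N" and "u \<in> Vsp N \<Gamma>"
    and nodal: "\<And>z. z \<in> N - \<Gamma> \<Longrightarrow> Kform N E \<gamma> u (indicator {z}) = Mform N E g (indicator {z})"
  shows "solves N E \<gamma> \<Gamma> g u"
  unfolding solves_def
proof (intro conjI ballI)
  fix v assume v: "v \<in> Vsp N \<Gamma>"
  have "Kform N E \<gamma> u v = (\<Sum>z\<in>N. v z * Kform N E \<gamma> u (indicator {z}))"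
    by (rule Kform_expand_right[OF assms(1)])
  also have "\<dots> = (\<Sum>z\<in>N. v z * Mform N E g (indicator {z}))"
    using v nodal by (intro sum.cong) (auto simp: Vsp_def)
  also have "\<dots> = Mform N E g v"
    by (rule Mform_expand_right[OF assms(1), symmetric])
  finally show "Kform N E \<gamma> u v = Mform N E g v" .
qed fact

lemma Kform_nodal_kernel_trivial:
  assumes "finite N" and "E \<subseteq> N \<times> N" and "irrefl E"
    and "\<forall>x\<in>N. \<forall>y\<in>N. (x,y) \<in> E\<^sup>*" and "N \<inter> \<Gamma> \<noteq> {}"
    and "\<forall>(x,y)\<in>E. 0 < \<gamma> x y"
    and v: "v \<in> supported_on (N - \<Gamma>)"
    and nodal: "\<And>z. z \<in> N - \<Gamma> \<Longrightarrow> Kform N E \<gamma> v (indicator {z}) = 0"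
  shows "v = 0"
proof -
  have vanish: "v z * Kform N E \<gamma> v (indicator {z}) = 0" for z
    using v nodal by (cases "z \<in> N - \<Gamma>") (auto simp: supported_on_def)
  have "Kform N E \<gamma> v v = (\<Sum>z\<in>N. v z * Kform N E \<gamma> v (indicator {z}))"
    by (rule Kform_expand_right[OF assms(1)])
  also have "\<dots> = 0"
    by (rule sum.neutral) (rule ballI, rule vanish)
  finally have "Kform N E \<gamma> v v = 0" .
  moreover have "v \<in> Vsp N \<Gamma>"
    using v by (auto simp: Vsp_def supported_on_def)
  ultimately have "v x = 0" for x
    using v Kform_self_eq_0_imp_vanish[OF assms(1-6), of v x]
    by (cases "x \<in> N") (auto simp: supported_on_def)
  then show ?thesis
    by auto
qed

lemma solves_exists:
  assumes "finite N" and "E \<subseteq> N \<times> N" and "irrefl E"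
    and "\<forall>x\<in>N. \<forall>y\<in>N. (x,y) \<in> E\<^sup>*" and "N \<inter> \<Gamma> \<noteq> {}"
    and "\<forall>(x,y)\<in>E. 0 < \<gamma> x y"
  shows "\<exists>u. solves N E \<gamma> \<Gamma> g u"
proof -
  define D where "D = N - \<Gamma>"
  define A where "A w z = (if z \<in> D then Kform N E \<gamma> w (indicator {z}) else 0)" for w z
  define b where "b z = (if z \<in> D then Mform N E g (indicator {z}) else 0)" for z
  have "A ` supported_on D = supported_on D"
  proof (rule linear_inj_on_supported_imp_surj)
    show "finite D"
      using assms(1) by (simp add: D_def)
    show "Vector_Spaces.linear (\<lambda>c f x. c * f x) (\<lambda>c f x. c * f x) A"
      unfolding Vector_Spaces.linear_iff
    proof (intro conjI allI fun_vs.vector_space_axioms)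
      show "A (v + w) = A v + A w" for v w
        using Kform_linear_left[of N E \<gamma> 1 v 1 w] by (simp add: A_def fun_eq_iff plus_fun_def)
      show "A (\<lambda>x. c * v x) = (\<lambda>x. c * A v x)" for c v
        using Kform_linear_left[of N E \<gamma> c v 0 v] by (simp add: A_def fun_eq_iff)
    qed
    show "A ` supported_on D \<subseteq> supported_on D"
      by (auto simp: A_def supported_on_def)
  next
    fix v assume v: "v \<in> supported_on D" and Av: "A v = 0"
    have "Kform N E \<gamma> v (indicator {z}) = 0" if "z \<in> N - \<Gamma>" for z
      using that fun_cong[OF Av, of z] by (simp add: A_def D_def)
    then show "v = 0"
      using Kform_nodal_kernel_trivial[OF assms] v by (simp add: D_def)
  qed
  moreover have "b \<in> supported_on D"
    by (simp add: supported_on_def b_def)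
  ultimately have "b \<in> A ` supported_on D"
    by simp
  then obtain u where Au: "b = A u" and u: "u \<in> supported_on D"
    by (rule imageE)
  have "solves N E \<gamma> \<Gamma> g u"
  proof (rule solves_if_nodal[OF assms(1)])
    show "u \<in> Vsp N \<Gamma>"
      using u by (auto simp: Vsp_def supported_on_def D_def)
    fix z assume "z \<in> N - \<Gamma>"
    then show "Kform N E \<gamma> u (indicator {z}) = Mform N E g (indicator {z})"
      using fun_cong[OF Au, of z] by (simp add: A_def b_def D_def)
  qed
  then show ?thesis
    by blast
qed

section \<open>The piecewise constant projection\<close>

lemma cell_index_unique:
  fixes H t :: real
  assumes "H > 0"
    and "real n * H \<le> t" "t < real n * H + H \<or> (real n * H + H = 1 \<and> t \<le> 1)" "real n * H + H \<le> 1"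
    and "real m * H \<le> t" "t < real m * H + H \<or> (real m * H + H = 1 \<and> t \<le> 1)" "real m * H + H \<le> 1"
  shows "n = m"
proof (rule ccontr)
  have step: "real i * H + H \<le> real j * H" if "i < j" for i j
    using mult_right_mono[of "real i + 1" "real j" H] that \<open>H > 0\<close> by (simp add: algebra_simps)
  assume "n \<noteq> m"
  then consider "n < m" | "m < n"
    by linarith
  then show False
  proof cases
    case 1
    then show False
      using assms step[of n m] by linarith
  next
    case 2
    then show False
      using assms step[of m n] by linarith
  qed
qed

lemma cells_disjoint:
  assumes "H > 0" and "T \<in> cells H" and "T' \<in> cells H" and "x \<in> T" and "x \<in> T'"
  shows "T = T'"
proof -
  obtain k where k: "T = cube H k" "\<forall>i. real (k i) * H + H \<le> 1"
    using assms(2) unfolding cells_def by auto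
  obtain k' where k': "T' = cube H k'" "\<forall>i. real (k' i) * H + H \<le> 1"
    using assms(3) unfolding cells_def by auto
  have "k i = k' i" for i
    using assms(4,5) k k' unfolding cube_def
    by (intro cell_index_unique[OF assms(1), of "k i" "x$i" "k' i"]) auto
  then have "k = k'"
    by auto
  then show ?thesis
    using k k' by simp
qed

lemma cells_finite:
  assumes "H > 0"
  shows "finite (cells H :: (real^'d) set set)"
proof -
  let ?K = "Pi\<^sub>E (UNIV :: 'd set) (\<lambda>_. {..nat \<lceil>1/H\<rceil>})"
  have "k i \<le> nat \<lceil>1/H\<rceil>" if "real (k i) * H + H \<le> 1" for k :: "'d \<Rightarrow> nat" and i
  proof -
    have "real (k i) \<le> 1/H"
      using that assms by (simp add: pos_le_divide_eq)
    then show ?thesis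
      by linarith
  qed
  then have "cells H \<subseteq> cube H ` ?K"
    unfolding cells_def by (auto simp: PiE_UNIV_domain)
  then show ?thesis
    by (rule finite_subset) (intro finite_imageI finite_PiE; simp)
qed

definition cell_average ::
  "(real^'d) set \<Rightarrow> ((real^'d) \<times> (real^'d)) set \<Rightarrow> (real^'d \<Rightarrow> real) \<Rightarrow> (real^'d) set \<Rightarrow> real"
where
  "cell_average N E v T = (if N \<inter> T = {} then 0
     else Mform_on N E T v (\<lambda>_. 1) / Mform_on N E T (\<lambda>_. 1) (\<lambda>_. 1))"

lemma PiH_eq_cell_average: "PiH N E H v = (\<lambda>z. \<Sum>T\<in>cells H. cell_average N E v T * indicator T z)"
  unfolding PiH_def cell_average_def ..

lemma PiH_in_P0: "PiH N E H v \<in> P0 H"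
  unfolding P0_def PiH_eq_cell_average by blast

lemma PiH_on_cell:
  fixes N :: "(real^'d) set"
  assumes "H > 0" and "T \<in> cells H" and "x \<in> T"
  shows "PiH N E H v x = cell_average N E v T"
proof -
  have "x \<notin> T'" if "T' \<in> cells H" "T' \<noteq> T" for T'
    using cells_disjoint[OF assms(1) that(1) assms(2) _ assms(3)] that(2) by blast
  then have "PiH N E H v x = (\<Sum>T'\<in>cells H. if T' = T then cell_average N E v T' else 0)"
    unfolding PiH_eq_cell_average using assms(3) by (intro sum.cong) auto
  also have "\<dots> = cell_average N E v T"
    using assms(2) cells_finite[OF assms(1), where 'd='d] by simp
  finally show ?thesis .
qed

lemma Mform_indicator:
  assumes "finite N"
  shows "Mform N E v (indicator T) = Mform_on N E T v (\<lambda>_. 1)"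
proof -
  have "Mform N E v (indicator T) = (\<Sum>x\<in>N. if x \<in> T then node_mass N E x * v x * 1 else 0)"
    unfolding Mform_eq_node_mass by (intro sum.cong) (auto simp: indicator_def)
  also have "\<dots> = Mform_on N E T v (\<lambda>_. 1)"
    unfolding Mform_on_eq_node_mass by (rule sum.inter_restrict[OF assms, symmetric])
  finally show ?thesis .
qed

lemma Mform_residual_indicator:
  assumes "finite N" and "H > 0" and T: "T \<in> cells H"
  shows "Mform N E (\<lambda>x. v x - PiH N E H v x) (indicator T) = 0"
proof -
  let ?m = "node_mass N E" and ?c = "cell_average N E v T"
  have "Mform N E (\<lambda>x. v x - PiH N E H v x) (indicator T) = (\<Sum>x\<in>N \<inter> T. ?m x * (v x - ?c))"
    unfolding Mform_indicator[OF assms(1)] Mform_on_eq_node_mass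
    by (intro sum.cong) (simp_all add: PiH_on_cell[OF assms(2) T])
  also have "\<dots> = (\<Sum>x\<in>N \<inter> T. ?m x * v x) - ?c * (\<Sum>x\<in>N \<inter> T. ?m x)"
    by (simp add: algebra_simps sum_subtractf sum_distrib_left)
  also have "\<dots> = 0"
  proof (cases "(\<Sum>x\<in>N \<inter> T. ?m x) = 0")
    case True
    \<comment> \<open>all nodal masses in T vanish, so both terms are zero whatever value the
      division by zero in \<open>cell_average\<close> produced\<close>
    then have "\<forall>x\<in>N \<inter> T. ?m x = 0"
      using assms(1) by (simp add: sum_nonneg_eq_0_iff node_mass_nonneg)
    then show ?thesis
      using True by simp
  next
    case False
    then show ?thesis
      by (auto simp: cell_average_def Mform_on_eq_node_mass)
  qed
  finally show ?thesis .
qed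

lemma Mform_residual_P0:
  fixes N :: "(real^'d) set"
  assumes "finite N" and "H > 0" and "g \<in> P0 H"
  shows "Mform N E (\<lambda>x. v x - PiH N E H v x) g = 0"
proof -
  obtain c where g: "g = (\<lambda>z. \<Sum>T\<in>cells H. c T * indicator T z)"
    using assms(3) unfolding P0_def by blast
  show ?thesis
    unfolding g
    by (simp add: Mform_sum_right[OF cells_finite[OF assms(2), where 'd='d]]
        Mform_residual_indicator[OF assms(1,2)])
qed

section \<open>The Galerkin error\<close>

lemma galerkin_energy_identity:
  assumes u: "solves N E \<gamma> \<Gamma> f u" and "uH \<in> Vsp N \<Gamma>"
    and "Kform N E \<gamma> uH uH = Mform N E f uH"
  shows "Kform N E \<gamma> (\<lambda>x. u x - uH x) (\<lambda>x. u x - uH x) = Mform N E f (\<lambda>x. u x - uH x)"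
proof -
  have Ku: "Kform N E \<gamma> u v = Mform N E f v" if "v \<in> Vsp N \<Gamma>" for v
    using u that unfolding solves_def by blast
  have "(\<lambda>x. u x - uH x) \<in> Vsp N \<Gamma>"
    using u assms(2) unfolding solves_def Vsp_def by auto
  then have "Kform N E \<gamma> u (\<lambda>x. u x - uH x) = Mform N E f (\<lambda>x. u x - uH x)"
    by (rule Ku)
  moreover have "Kform N E \<gamma> uH (\<lambda>x. u x - uH x) = Kform N E \<gamma> u uH - Kform N E \<gamma> uH uH"
    using Kform_commute[of N E \<gamma> uH "\<lambda>x. u x - uH x"] Kform_diff_left[of N E \<gamma> u uH uH] by simp
  moreover have "Kform N E \<gamma> u uH = Kform N E \<gamma> uH uH"
    using Ku[OF assms(2)] assms(3) by simp
  ultimately show ?thesis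
    by (simp add: Kform_diff_left)
qed

lemma galerkin_error_orthogonal:
  assumes u: "solves N E \<gamma> \<Gamma> f u" and "uH \<in> Vsp N \<Gamma>"
    and galerkin: "\<forall>vH\<in>VH N E \<gamma> \<Gamma> H. Kform N E \<gamma> uH vH = Mform N E f vH"
    and "g \<in> P0 H" and w: "solves N E \<gamma> \<Gamma> g w"
  shows "Mform N E g (\<lambda>x. u x - uH x) = 0"
proof -
  have "w \<in> VH N E \<gamma> \<Gamma> H"
    using assms(4) w unfolding VH_def by blast
  then have "Mform N E g uH = Mform N E f w"
    using w assms(2) galerkin Kform_commute[of N E \<gamma> w uH] by (simp add: solves_def)
  moreover have "Mform N E g u = Mform N E f w"
    using w u Kform_commute[of N E \<gamma> w u] by (simp add: solves_def)
  ultimately show ?thesis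
    by (simp add: Mform_diff_right)
qed

lemma galerkin_error_representation:
  fixes N :: "(real^'d) set"
  assumes "finite N" and "E \<subseteq> N \<times> N" and "irrefl E"
    and "\<forall>x\<in>N. \<forall>y\<in>N. (x,y) \<in> E\<^sup>*" and "N \<inter> \<Gamma> \<noteq> {}"
    and "\<forall>(x,y)\<in>E. 0 < \<gamma> x y" and "H > 0"
    and u: "solves N E \<gamma> \<Gamma> f u" and uH: "uH \<in> VH N E \<gamma> \<Gamma> H"
    and galerkin: "\<forall>vH\<in>VH N E \<gamma> \<Gamma> H. Kform N E \<gamma> uH vH = Mform N E f vH"
  defines "e \<equiv> \<lambda>x. u x - uH x"
  shows "Kform N E \<gamma> e e = Mform N E (\<lambda>x. f x - PiH N E H f x) (\<lambda>x. e x - PiH N E H e x)"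
proof -
  have "uH \<in> Vsp N \<Gamma>"
    using uH by (auto simp: VH_def solves_def)
  obtain w where "solves N E \<gamma> \<Gamma> (PiH N E H f) w"
    using solves_exists[OF assms(1-6)] by blast
  then have "Mform N E (PiH N E H f) e = 0"
    unfolding e_def
    by (rule galerkin_error_orthogonal[OF u \<open>uH \<in> Vsp N \<Gamma>\<close> galerkin PiH_in_P0])
  moreover have "Mform N E (\<lambda>x. f x - PiH N E H f x) (PiH N E H e) = 0"
    by (rule Mform_residual_P0[OF assms(1,7) PiH_in_P0])
  moreover have "Kform N E \<gamma> e e = Mform N E f e"
    unfolding e_def
    by (rule galerkin_energy_identity[OF u \<open>uH \<in> Vsp N \<Gamma>\<close>]) (use uH galerkin in blast)
  ultimately show ?thesis
    by (simp add: Mform_diff_left Mform_diff_right)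
qed

lemma le_divide_if_mult_square_le:
  fixes a b \<alpha> :: real
  assumes "0 \<le> a" and "0 \<le> b" and "0 < \<alpha>" and "\<alpha> * a\<^sup>2 \<le> b * a"
  shows "a \<le> b / \<alpha>"
proof (cases "a = 0")
  case False
  then have "\<alpha> * a \<le> b"
    using assms by (simp add: power2_eq_square mult.assoc mult_le_cancel_right)
  then show ?thesis
    using assms(3) by (simp add: pos_le_divide_eq mult.commute)
qed (use assms in simp)

theorem mainTheorem5:
  fixes N :: "(real^'d) set" and E :: "((real^'d) \<times> (real^'d)) set"
    and \<Gamma> :: "(real^'d) set" and \<gamma> :: "real^'d \<Rightarrow> real^'d \<Rightarrow> real"
    and \<alpha> \<beta> C\<^sub>\<Pi> H :: real and Hs :: "real set"
    and f u uH :: "real^'d \<Rightarrow> real"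
  assumes finN: "finite N" and cardN: "card N \<ge> 2" and NOmega: "N \<subseteq> Omega"
    and Esub: "E \<subseteq> N \<times> N" and Esym: "sym E" and Eirr: "irrefl E"
    and conn: "\<forall>x\<in>N. \<forall>y\<in>N. (x,y) \<in> E\<^sup>*"
    and Gam: "\<Gamma> \<subseteq> frontier Omega" and GamN: "N \<inter> \<Gamma> \<noteq> {}"
    and alpha: "0 < \<alpha>" "\<alpha> \<le> \<beta>"
    and gsym: "\<forall>(x,y)\<in>E. \<gamma> x y = \<gamma> y x"
    and grange: "\<forall>(x,y)\<in>E. \<alpha> \<le> \<gamma> x y \<and> \<gamma> x y \<le> \<beta>"
    and Hs: "finite Hs" "\<forall>H'\<in>Hs. H' > 0 \<and> (\<exists>n::nat. 1 / H' = real n)"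
    and netconn: "network_connectivity N E Hs"
    and poinc: "poincare_scaling N E Hs"
    and CPi: "C\<^sub>\<Pi> > 0"
    and CPi_bound: "\<forall>v. \<forall>H'\<in>Hs. semiM N E (\<lambda>x. v x - PiH N E H' v x) \<le> C\<^sub>\<Pi> * H' * semiL N E v"
    and H: "H \<in> Hs"
    and u: "solves N E \<gamma> \<Gamma> f u"
    and uH: "uH \<in> VH N E \<gamma> \<Gamma> H"
    and galerkin: "\<forall>vH\<in>VH N E \<gamma> \<Gamma> H. Kform N E \<gamma> uH vH = Mform N E f vH"
  shows "semiL N E (\<lambda>x. u x - uH x)
           \<le> C\<^sub>\<Pi> / \<alpha> * H * semiM N E (\<lambda>x. f x - PiH N E H f x)
       \<and> C\<^sub>\<Pi> / \<alpha> * H * semiM N E (\<lambda>x. f x - PiH N E H f x)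
           \<le> C\<^sub>\<Pi>^2 / \<alpha> * H^2 * semiL N E f"
proof -
  have "H > 0"
    using Hs(2) H by blast
  have gamma_pos: "\<forall>(x,y)\<in>E. 0 < \<gamma> x y" and gamma_ge: "\<forall>(x,y)\<in>E. \<alpha> \<le> \<gamma> x y"
    using grange alpha(1) by fastforce+
  define e where "e x = u x - uH x" for x
  define r where "r x = f x - PiH N E H f x" for x
  have approx: "semiM N E (\<lambda>x. v x - PiH N E H v x) \<le> C\<^sub>\<Pi> * H * semiL N E v" for v
    using CPi_bound H by blast
  have "\<alpha> * (semiL N E e)\<^sup>2 \<le> Kform N E \<gamma> e e"
    using Kform_coercive[OF Eirr gamma_ge] Lform_self_nonneg[OF Eirr] alpha(1)
    by (simp add: semiL_def)
  also have "\<dots> = Mform N E r (\<lambda>x. e x - PiH N E H e x)"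
    unfolding e_def r_def
    by (rule galerkin_error_representation[OF finN Esub Eirr conn GamN gamma_pos \<open>H > 0\<close> u uH galerkin])
  also have "\<dots> \<le> semiM N E r * semiM N E (\<lambda>x. e x - PiH N E H e x)"
    by (rule order_trans[OF abs_ge_self Mform_Cauchy_Schwarz])
  also have "\<dots> \<le> semiM N E r * (C\<^sub>\<Pi> * H * semiL N E e)"
    by (rule mult_left_mono[OF approx semiM_nonneg])
  also have "\<dots> = (C\<^sub>\<Pi> * H * semiM N E r) * semiL N E e"
    by (simp add: mult_ac)
  finally have "semiL N E e \<le> C\<^sub>\<Pi> * H * semiM N E r / \<alpha>"
    by (rule le_divide_if_mult_square_le[rotated 3])
      (use semiL_nonneg[OF Eirr] semiM_nonneg[of N E r] CPi \<open>H > 0\<close> alpha(1) in simp_all)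
  moreover have "C\<^sub>\<Pi> / \<alpha> * H * semiM N E r \<le> C\<^sub>\<Pi> / \<alpha> * H * (C\<^sub>\<Pi> * H * semiL N E f)"
    using approx[of f] CPi alpha(1) \<open>H > 0\<close> unfolding r_def by (intro mult_left_mono) simp_all
  ultimately show ?thesis
    unfolding e_def r_def by (simp add: power2_eq_square field_simps)
qed

end
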